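(* Let $X\in\mathcal M_{\mathbf r}$, $V\in\mathrm T_X\mathcal M_{\mathbf r}$, $Z\in\mathbb R^{n_1\times\cdots\times n_d}$ and $i,j\in[d]$. The tensor $W:=\mathcal P_X^i(\mathrm D_V\mathcal P_X^j)(Z)$ lies in the range of $\mathcal P_X^i$ and can be written $W(i_1,\dots,i_d)=U_1(i_1)\cdots U_{i-1}(i_{i-1})\,\delta\tilde V_i(i_i)\,\tilde U_{i+1}(i_{i+1})\cdots\tilde U_d(i_d)$ for a core $\delta\tilde V_i\in\mathbb R^{r_{i-1}\times n_i\times r_i}$, so that $W^{<i>}=(I_{n_i}\otimes X_{\le i-1})\delta\tilde V_i^L\tilde X_{\ge i+1}^\top$. If a matrix $B\in\mathbb R^{n_ir_{i-1}\times r_i}$ satisfies $W^{<i>}=(I_{n_i}\otimes X_{\le i-1})B\tilde X_{\ge i+1}^\top$, then $B=\delta\tilde V_i^L$.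
   Context: Fix $d\ge2$, positive integers $n_1,\dots,n_d$, $\mathbf r=(r_1,\dots,r_{d-1})$, $r_0=r_d=1$. Flattening $Z^{<\mu>}\in\mathbb R^{(n_1\cdots n_\mu)\times(n_{\mu+1}\cdots n_d)}$: rows indexed by $(i_1,\dots,i_\mu)$, columns by $(i_{\mu+1},\dots,i_d)$, colexicographic order. $\mathcal M_{\mathbf r}$: tensors with $(\mathrm{rank}\,Z^{<1>},\dots,\mathrm{rank}\,Z^{<d-1>})=\mathbf r$, a Riemannian submanifold of Euclidean space. $X$ has a minimal (sizes equal to TT-rank) left-orthogonal TT decomposition $U_1,\dots,U_d$ ($U_k\in\mathbb R^{r_{k-1}\times n_k\times r_k}$, $X(i_1,\dots,i_d)=U_1(i_1)\cdots U_d(i_d)$, $(U_k^L)^\top U_k^L=I$ for $k<d$, where $U^L=U^{<2>}$, $U^R=U^{<1>}$) and a minimal right-orthogonal TT decomposition $\tilde U_1,\dots,\tilde U_d$ ($\tilde U_k^R(\tilde U_k^R)^\top=I$ for $k\ge2$). Interface matrices: $X_{\le0}=1$, $X_{\le k}=(I_{n_k}\otimes X_{\le k-1})U_k^L$; $\tilde X_{\ge d+1}=1$, $\tilde X_{\ge k}^\top=\tilde U_k^R(\tilde X_{\ge k+1}^\top\otimes I_{n_k})$. Projectors for $Y\in\mathcal M_{\mathbf r}$ (independent of decomposition choices): $(\mathcal P_Y^kZ)^{<k>}=(I_{n_k}\otimes Y_{\le k-1}Y_{\le k-1}^\top-Y_{\le k}Y_{\le k}^\top)Z^{<k>}\tilde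 Y_{\ge k+1}\tilde Y_{\ge k+1}^\top$ for $k\in[d-1]$, $(\mathcal P_Y^dZ)^{<d>}=(I_{n_d}\otimes Y_{\le d-1}Y_{\le d-1}^\top)Z^{<d>}$. $(\mathrm D_V\mathcal P_X^j)Z:=\lim_{t\to0}(\mathcal P^j_{c(t)}Z-\mathcal P^j_{c(0)}Z)/t$ for a smooth curve $c$ in $\mathcal M_{\mathbf r}$ with $c(0)=X$, $c'(0)=V$. *)

theory Defs
  imports Complex_Main "Jordan_Normal_Form.DL_Rank"
begin

(* Tensors of order d = length n with mode sizes n!0,...,n!(d-1) (0-based indices).
   A tensor is a function on index lists, zero outside the valid index set. *)

definition tidx :: "nat list \<Rightarrow> nat list set" where
  "tidx n = {ix. length ix = length n \<and> (\<forall>k<length n. ix!k < n!k)}"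

definition tensors :: "nat list \<Rightarrow> (nat list \<Rightarrow> real) set" where
  "tensors n = {Z. \<forall>ix. ix \<notin> tidx n \<longrightarrow> Z ix = 0}"

(* colexicographic linear index: first index runs fastest *)
fun lin :: "nat list \<Rightarrow> nat list \<Rightarrow> nat" where
  "lin (m#ms) (i#is) = i + m * lin ms is"
| "lin _ _ = 0"

fun unlin :: "nat list \<Rightarrow> nat \<Rightarrow> nat list" where
  "unlin [] x = []"
| "unlin (m#ms) x = (x mod m) # unlin ms (x div m)"

definition flat :: "nat list \<Rightarrow> nat \<Rightarrow> (nat list \<Rightarrow> real) \<Rightarrow> real mat" where
  "flat n mu Z = mat (prod_list (take mu n)) (prod_list (drop mu n))
      (\<lambda>(a,b). Z (unlin (take mu n) a @ unlin (drop mu n) b))"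

definition unflat :: "nat list \<Rightarrow> nat \<Rightarrow> real mat \<Rightarrow> (nat list \<Rightarrow> real)" where
  "unflat n mu M = (\<lambda>ix. if ix \<in> tidx n
      then M $$ (lin (take mu n) (take mu ix), lin (drop mu n) (drop mu ix)) else 0)"

definition mrank :: "real mat \<Rightarrow> nat" where
  "mrank A = vec_space.rank (dim_row A) A"

(* TT ranks with r_0 = r_d = 1; r = [r_1,...,r_{d-1}] *)
definition rr :: "nat list \<Rightarrow> nat \<Rightarrow> nat" where
  "rr r k = (if k = 0 \<or> k = length r + 1 then 1 else r!(k-1))"

definition Mr :: "nat list \<Rightarrow> nat list \<Rightarrow> (nat list \<Rightarrow> real) set" where
  "Mr n r = {X \<in> tensors n. \<forall>mu\<in>{1..<length n}. mrank (flat n mu X) = r!(mu-1)}"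

(* Kronecker product, standard ordering: row (a,i) \<mapsto> a * dim_row B + i *)
definition kron :: "real mat \<Rightarrow> real mat \<Rightarrow> real mat" where
  "kron A B = mat (dim_row A * dim_row B) (dim_col A * dim_col B)
     (\<lambda>(p,q). A $$ (p div dim_row B, q div dim_col B) * B $$ (p mod dim_row B, q mod dim_col B))"

(* cores: U k i is the r_{k-1} x r_k matrix U_k(i), k \<in> {1..d}, i < n_k *)
type_synonym cores = "nat \<Rightarrow> nat \<Rightarrow> real mat"

definition core_ok :: "nat list \<Rightarrow> nat list \<Rightarrow> nat \<Rightarrow> (nat \<Rightarrow> real mat) \<Rightarrow> bool" where
  "core_ok n r k C = (\<forall>i<n!(k-1). C i \<in> carrier_mat (rr r (k-1)) (rr r k))"

(* U^L = U^{<2>}: rows (alpha,i) colex, i.e. alpha + r_{k-1} * i *)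
definition coreL :: "nat list \<Rightarrow> nat list \<Rightarrow> nat \<Rightarrow> (nat \<Rightarrow> real mat) \<Rightarrow> real mat" where
  "coreL n r k C = mat (rr r (k-1) * n!(k-1)) (rr r k)
     (\<lambda>(a,b). C (a div rr r (k-1)) $$ (a mod rr r (k-1), b))"

(* U^R = U^{<1>}: columns (i,beta) colex, i.e. i + n_k * beta *)
definition coreR :: "nat list \<Rightarrow> nat list \<Rightarrow> nat \<Rightarrow> (nat \<Rightarrow> real mat) \<Rightarrow> real mat" where
  "coreR n r k C = mat (rr r (k-1)) (n!(k-1) * rr r k)
     (\<lambda>(a,b). C (b mod n!(k-1)) $$ (a, b div n!(k-1)))"

definition tt_val :: "nat \<Rightarrow> cores \<Rightarrow> nat list \<Rightarrow> real" where
  "tt_val d C ix = (foldr (\<lambda>k M. C k (ix!(k-1)) * M) [1..<d+1] (1\<^sub>m 1)) $$ (0,0)"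

definition is_TT :: "nat list \<Rightarrow> nat list \<Rightarrow> cores \<Rightarrow> (nat list \<Rightarrow> real) \<Rightarrow> bool" where
  "is_TT n r U X = ((\<forall>k\<in>{1..length n}. core_ok n r k (U k))
      \<and> (\<forall>ix\<in>tidx n. X ix = tt_val (length n) U ix))"

definition left_orth_TT :: "nat list \<Rightarrow> nat list \<Rightarrow> cores \<Rightarrow> (nat list \<Rightarrow> real) \<Rightarrow> bool" where
  "left_orth_TT n r U X = (X \<in> Mr n r \<and> is_TT n r U X \<and>
     (\<forall>k\<in>{1..<length n}. (coreL n r k (U k))\<^sup>T * coreL n r k (U k) = 1\<^sub>m (rr r k)))"

definition right_orth_TT :: "nat list \<Rightarrow> nat list \<Rightarrow> cores \<Rightarrow> (nat list \<Rightarrow> real) \<Rightarrow> bool" where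
  "right_orth_TT n r U X = (X \<in> Mr n r \<and> is_TT n r U X \<and>
     (\<forall>k\<in>{2..length n}. coreR n r k (U k) * (coreR n r k (U k))\<^sup>T = 1\<^sub>m (rr r (k-1))))"

fun Xle :: "nat list \<Rightarrow> nat list \<Rightarrow> cores \<Rightarrow> nat \<Rightarrow> real mat" where
  "Xle n r U 0 = 1\<^sub>m 1"
| "Xle n r U (Suc k) = kron (1\<^sub>m (n!k)) (Xle n r U k) * coreL n r (Suc k) (U (Suc k))"

(* XgeT_aux m = \<tilde>X_{\<ge>d+1-m}^T *)
fun XgeT_aux :: "nat list \<Rightarrow> nat list \<Rightarrow> cores \<Rightarrow> nat \<Rightarrow> real mat" where
  "XgeT_aux n r U 0 = 1\<^sub>m 1"
| "XgeT_aux n r U (Suc m) =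
     coreR n r (length n - m) (U (length n - m)) * kron (XgeT_aux n r U m) (1\<^sub>m (n!(length n - m - 1)))"

definition XgeT :: "nat list \<Rightarrow> nat list \<Rightarrow> cores \<Rightarrow> nat \<Rightarrow> real mat" where
  "XgeT n r U k = XgeT_aux n r U (length n + 1 - k)"

(* tangent-space projectors P_Y^k, defined via some minimal left-/right-orthogonal
   decompositions of Y (they are independent of this choice) *)
definition Pk :: "nat list \<Rightarrow> nat list \<Rightarrow> (nat list \<Rightarrow> real) \<Rightarrow> nat \<Rightarrow> (nat list \<Rightarrow> real) \<Rightarrow> (nat list \<Rightarrow> real)" where
  "Pk n r Y k Z = (let U = (SOME U. left_orth_TT n r U Y);
                       V = (SOME V. right_orth_TT n r V Y);
                       A = Xle n r U (k-1); B = Xle n r U k; G = XgeT n r V (k+1) in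
     if k < length n then
       unflat n k ((kron (1\<^sub>m (n!(k-1))) (A * A\<^sup>T) - B * B\<^sup>T) * flat n k Z * (G\<^sup>T * G))
     else unflat n k (kron (1\<^sub>m (n!(k-1))) (A * A\<^sup>T) * flat n k Z))"

definition smooth_on :: "real set \<Rightarrow> (real \<Rightarrow> real) \<Rightarrow> bool" where
  "smooth_on S f = (\<exists>fs. fs 0 = f \<and>
     (\<forall>m. \<forall>t\<in>S. (fs m has_real_derivative fs (Suc m) t) (at t)))"

definition smooth_curve :: "nat list \<Rightarrow> nat list \<Rightarrow> (real \<Rightarrow> nat list \<Rightarrow> real)
     \<Rightarrow> (nat list \<Rightarrow> real) \<Rightarrow> (nat list \<Rightarrow> real) \<Rightarrow> bool" where
  "smooth_curve n r c X V = (\<exists>\<epsilon>>0. (\<forall>t\<in>{-\<epsilon><..<\<epsilon>}. c t \<in> Mr n r)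
      \<and> (\<forall>ix. smooth_on {-\<epsilon><..<\<epsilon>} (\<lambda>t. c t ix))
      \<and> c 0 = X \<and> (\<forall>ix. ((\<lambda>t. c t ix) has_real_derivative V ix) (at 0)))"

definition tangent_space :: "nat list \<Rightarrow> nat list \<Rightarrow> (nat list \<Rightarrow> real) \<Rightarrow> (nat list \<Rightarrow> real) set" where
  "tangent_space n r X = {V. \<exists>c. smooth_curve n r c X V}"

definition is_DP :: "nat list \<Rightarrow> nat list \<Rightarrow> (real \<Rightarrow> nat list \<Rightarrow> real) \<Rightarrow> nat
     \<Rightarrow> (nat list \<Rightarrow> real) \<Rightarrow> (nat list \<Rightarrow> real) \<Rightarrow> bool" where
  "is_DP n r c j Z D = (\<forall>ix. ((\<lambda>t. (Pk n r (c t) j Z ix - Pk n r (c 0) j Z ix) / t)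
                              \<longlongrightarrow> D ix) (at 0))"

end

theory Submission
  imports Defs
begin

text \<open>
  Write A = X_{<=i-1} and G = X~_{>=i+1}^T for the interface matrices of the given
  decompositions, and A', G' for those of the decompositions chosen in the definition of P_X^i.
  The flattening W^{<i>} of W = P_X^i D factors both as (I (x) A') Y and as Y' G'. Because the
  flattenings of X have full rank, A and A' span the same column space and G, G' the same row
  space, so W^{<i>} is fixed by the orthogonal projectors I (x) A A^T on the left and G^T G on
  the right. Hence W^{<i>} = (I (x) A) C G with C = (I (x) A)^T W^{<i>} G^T, and C is the only
  such matrix because I (x) A has orthonormal columns and G orthonormal rows. Reading C as the
  left unfolding of a core and splicing it between the cores of the two decompositions gives
  the tensor-train representation of W. Of D only its vanishing outside the index range is used.
\<close>

section \<open>Index arithmetic\<close>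

lemma length_unlin [simp]: "length (unlin ms x) = length ms"
  by (induction ms arbitrary: x) auto

lemma unlin_nth_less:
  assumes "\<forall>j<length ms. ms!j > 0" "j < length ms"
  shows "unlin ms x ! j < ms ! j"
  using assms
proof (induction ms arbitrary: x j)
  case Nil then show ?case by simp
next
  case (Cons m ms)
  then show ?case by (cases j) force+
qed

lemma lin_unlin: "x < prod_list ms \<Longrightarrow> lin ms (unlin ms x) = x"
proof (induction ms arbitrary: x)
  case Nil then show ?case by simp
next
  case (Cons m ms)
  have "x div m < prod_list ms" using Cons.prems
    by (metis less_mult_imp_div_less mult.commute prod_list.Cons)
  then show ?case using Cons.IH[of "x div m"] by simp
qed

lemma lin_less:
  assumes "length js = length ms" "\<forall>j<length ms. js!j < ms!j"
  shows "lin ms js < prod_list ms"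
  using assms
proof (induction ms arbitrary: js)
  case Nil then show ?case by simp
next
  case (Cons m ms)
  then obtain i js' where js: "js = i # js'" by (cases js) auto
  have i: "i < m" using Cons.prems js by auto
  have "lin ms js' + 1 \<le> prod_list ms" using Cons.IH[of js'] Cons.prems js by force
  then have "m * (lin ms js' + 1) \<le> m * prod_list ms" by (rule mult_le_mono2)
  then show ?case using js i by (simp add: algebra_simps)
qed

lemma unlin_lin:
  assumes "length js = length ms" "\<forall>j<length ms. js!j < ms!j"
  shows "unlin ms (lin ms js) = js"
  using assms
proof (induction ms arbitrary: js)
  case Nil then show ?case by simp
next
  case (Cons m ms)
  then obtain i js' where js: "js = i # js'" by (cases js) auto
  then show ?case using Cons by force
qed

lemma lin_append_singleton:
  "length js = length ms \<Longrightarrow> lin (ms @ [m]) (js @ [i]) = lin ms js + prod_list ms * i"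
proof (induction ms arbitrary: js)
  case Nil then show ?case by simp
next
  case (Cons m' ms)
  then show ?case by (cases js) (auto simp: algebra_simps)
qed

lemma mult_add_less_mult:
  fixes i a m P :: nat
  assumes "i < m" "a < P"
  shows "i * P + a < m * P"
proof -
  have "i * P + a < (i + 1) * P" using assms(2) by simp
  also have "\<dots> \<le> m * P" using assms(1) by (intro mult_right_mono) auto
  finally show ?thesis .
qed

lemma mult_less_imp_div_mod_less:
  fixes p m1 m2 :: nat
  assumes "p < m1 * m2"
  shows "p div m2 < m1" "p mod m2 < m2"
proof -
  show "p div m2 < m1" using assms by (simp add: less_mult_imp_div_less)
  have "m2 > 0" using assms by (cases m2) auto
  then show "p mod m2 < m2" by simp
qed

lemma sum_lessThan_mult_split:
  fixes g :: "nat \<Rightarrow> 'a::comm_monoid_add"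
  shows "(\<Sum>q<m1*m2. g q) = (\<Sum>a<m1. \<Sum>b<m2. g (a*m2+b))"
  by (simp add: sum.nat_group[symmetric] sum.shift_bounds_nat_ivl[of g 0 _ m2, simplified]
      atLeast0LessThan add.commute)

lemma index_mult_mat_sum:
  fixes A B :: "'a::comm_semiring_0 mat"
  assumes "A \<in> carrier_mat a b" "B \<in> carrier_mat b c" "p < a" "s < c"
  shows "(A * B) $$ (p, s) = (\<Sum>q<b. A $$ (p, q) * B $$ (q, s))"
  using assms by (simp add: index_mult_mat scalar_prod_def lessThan_atLeast0)

section \<open>Kronecker products and orthonormal factors\<close>

lemma kron_dims [simp]:
  "dim_row (kron A B) = dim_row A * dim_row B" "dim_col (kron A B) = dim_col A * dim_col B"
  by (simp_all add: kron_def)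

lemma kron_index:
  "p < dim_row A * dim_row B \<Longrightarrow> q < dim_col A * dim_col B \<Longrightarrow>
   kron A B $$ (p,q) = A $$ (p div dim_row B, q div dim_col B) * B $$ (p mod dim_row B, q mod dim_col B)"
  by (simp add: kron_def)

lemma kron_mult_kron:
  assumes "dim_col A = dim_row C" "dim_col B = dim_row D"
  shows "kron A B * kron C D = kron (A * C) (B * D)"
proof (rule eq_matI)
  fix p s assume "p < dim_row (kron (A * C) (B * D))" and "s < dim_col (kron (A * C) (B * D))"
  then have p: "p < dim_row A * dim_row B" and s: "s < dim_col C * dim_col D" by auto
  have "(kron A B * kron C D) $$ (p,s) =
      (\<Sum>q<dim_col A * dim_col B. kron A B $$ (p,q) * kron C D $$ (q,s))"
    using p s assms by (intro index_mult_mat_sum) (auto intro: carrier_matI)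
  also have "\<dots> = (\<Sum>a<dim_col A. \<Sum>b<dim_col B.
      kron A B $$ (p, a * dim_col B + b) * kron C D $$ (a * dim_col B + b, s))"
    by (rule sum_lessThan_mult_split)
  also have "\<dots> = (\<Sum>a<dim_col A. \<Sum>b<dim_col B.
       (A $$ (p div dim_row B, a) * C $$ (a, s div dim_col D)) *
       (B $$ (p mod dim_row B, b) * D $$ (b, s mod dim_col D)))"
    using p s assms by (intro sum.cong refl) (simp add: kron_index mult_add_less_mult)
  also have "\<dots> = kron (A * C) (B * D) $$ (p,s)"
    using p s assms mult_less_imp_div_mod_less[OF p] mult_less_imp_div_mod_less[OF s]
    by (simp add: kron_index index_mult_mat scalar_prod_def lessThan_atLeast0 sum_product mult_ac)
  finally show "(kron A B * kron C D) $$ (p,s) = kron (A * C) (B * D) $$ (p,s)" .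
qed (use assms in auto)

lemma transpose_kron: "(kron A B)\<^sup>T = kron A\<^sup>T B\<^sup>T"
  by (rule eq_matI) (auto simp: kron_index mult_less_imp_div_mod_less)

lemma kron_one_one: "kron (1\<^sub>m a) (1\<^sub>m b) = (1\<^sub>m (a*b) :: real mat)"
proof (rule eq_matI)
  fix p q assume "p < dim_row (1\<^sub>m (a*b) :: real mat)" "q < dim_col (1\<^sub>m (a*b) :: real mat)"
  then have p: "p < a*b" and q: "q < a*b" by auto
  have "(p div b = q div b \<and> p mod b = q mod b) = (p = q)"
    by (metis div_mult_mod_eq)
  then show "kron (1\<^sub>m a) (1\<^sub>m b) $$ (p, q) = (1\<^sub>m (a*b) :: real mat) $$ (p, q)"
    using p q mult_less_imp_div_mod_less[OF p] mult_less_imp_div_mod_less[OF q]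
    by (auto simp: kron_index)
qed auto

lemma kron_one_mult_kron_one:
  "dim_col X = dim_row Y \<Longrightarrow> kron (1\<^sub>m a) X * kron (1\<^sub>m a) Y = kron (1\<^sub>m a) (X * Y)"
  using kron_mult_kron[of "1\<^sub>m a" "1\<^sub>m a" X Y] by simp

lemma kron_one_orthonormal_cols:
  assumes "X \<in> carrier_mat P r" "X\<^sup>T * X = 1\<^sub>m r"
  shows "(kron (1\<^sub>m m) X)\<^sup>T * kron (1\<^sub>m m) X = 1\<^sub>m (m * r)"
  using assms kron_one_mult_kron_one[of "X\<^sup>T" X m] by (simp add: transpose_kron kron_one_one)

lemma kron_one_orthonormal_rows:
  assumes "G \<in> carrier_mat r Q" "G * G\<^sup>T = 1\<^sub>m r"
  shows "kron G (1\<^sub>m m) * (kron G (1\<^sub>m m))\<^sup>T = 1\<^sub>m (r * m)"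
  using assms kron_mult_kron[of G "G\<^sup>T" "1\<^sub>m m" "1\<^sub>m m"] by (simp add: transpose_kron kron_one_one)

lemma kron_one_mult_index:
  assumes X: "X \<in> carrier_mat P r" and L: "L \<in> carrier_mat (m * r) s"
    and a: "a < P" and i: "i < m" and "\<beta> < s"
  shows "(kron (1\<^sub>m m) X * L) $$ (i * P + a, \<beta>) = (\<Sum>\<alpha><r. X $$ (a, \<alpha>) * L $$ (i * r + \<alpha>, \<beta>))"
proof -
  have "(kron (1\<^sub>m m) X * L) $$ (i * P + a, \<beta>) =
      (\<Sum>q<m * r. kron (1\<^sub>m m) X $$ (i * P + a, q) * L $$ (q, \<beta>))"
    using assms mult_add_less_mult[OF i a] by (intro index_mult_mat_sum) (auto intro: carrier_matI)
  also have "\<dots> =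
      (\<Sum>i'<m. \<Sum>\<alpha><r. kron (1\<^sub>m m) X $$ (i * P + a, i' * r + \<alpha>) * L $$ (i' * r + \<alpha>, \<beta>))"
    by (rule sum_lessThan_mult_split)
  also have "\<dots> = (\<Sum>i'<m. if i = i' then \<Sum>\<alpha><r. X $$ (a, \<alpha>) * L $$ (i' * r + \<alpha>, \<beta>) else 0)"
  proof (intro sum.cong refl)
    fix i' assume "i' \<in> {..<m}"
    then have "kron (1\<^sub>m m) X $$ (i * P + a, i' * r + \<alpha>) = (if i = i' then X $$ (a, \<alpha>) else 0)"
      if "\<alpha> < r" for \<alpha>
      using that assms mult_add_less_mult[OF i a] by (simp add: kron_index mult_add_less_mult)
    then show "(\<Sum>\<alpha><r. kron (1\<^sub>m m) X $$ (i * P + a, i' * r + \<alpha>) * L $$ (i' * r + \<alpha>, \<beta>)) =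
        (if i = i' then \<Sum>\<alpha><r. X $$ (a, \<alpha>) * L $$ (i' * r + \<alpha>, \<beta>) else 0)"
      by (cases "i = i'") simp_all
  qed
  finally show ?thesis using i by simp
qed

lemma mult_kron_one_index:
  assumes R: "R \<in> carrier_mat r (s * m)" and G: "G \<in> carrier_mat s Q"
    and "\<alpha> < r" and i: "i < m" and b: "b < Q"
  shows "(R * kron G (1\<^sub>m m)) $$ (\<alpha>, b * m + i) = (\<Sum>\<beta><s. R $$ (\<alpha>, \<beta> * m + i) * G $$ (\<beta>, b))"
proof -
  have "(R * kron G (1\<^sub>m m)) $$ (\<alpha>, b * m + i) =
      (\<Sum>q<s * m. R $$ (\<alpha>, q) * kron G (1\<^sub>m m) $$ (q, b * m + i))"
    using assms mult_add_less_mult[OF b i] by (intro index_mult_mat_sum) (auto intro: carrier_matI)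
  also have "\<dots> =
      (\<Sum>\<beta><s. \<Sum>i'<m. R $$ (\<alpha>, \<beta> * m + i') * kron G (1\<^sub>m m) $$ (\<beta> * m + i', b * m + i))"
    by (rule sum_lessThan_mult_split)
  also have "\<dots> = (\<Sum>\<beta><s. R $$ (\<alpha>, \<beta> * m + i) * G $$ (\<beta>, b))"
  proof (intro sum.cong refl)
    fix \<beta> assume "\<beta> \<in> {..<s}"
    then have "kron G (1\<^sub>m m) $$ (\<beta> * m + i', b * m + i) = (if i' = i then G $$ (\<beta>, b) else 0)"
      if "i' < m" for i'
      using that assms mult_add_less_mult[OF b i] by (simp add: kron_index mult_add_less_mult)
    then show "(\<Sum>i'<m. R $$ (\<alpha>, \<beta> * m + i') * kron G (1\<^sub>m m) $$ (\<beta> * m + i', b * m + i)) =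
        R $$ (\<alpha>, \<beta> * m + i) * G $$ (\<beta>, b)"
      using i by (simp add: if_distrib[where f = "\<lambda>x. _ * x"] cong: if_cong)
  qed
  finally show ?thesis .
qed

lemma orthonormal_cols_mult:
  fixes K L :: "real mat"
  assumes K: "K \<in> carrier_mat P p" and L: "L \<in> carrier_mat p q"
    and KK: "K\<^sup>T * K = 1\<^sub>m p" and LL: "L\<^sup>T * L = 1\<^sub>m q"
  shows "(K * L)\<^sup>T * (K * L) = 1\<^sub>m q"
proof -
  have "(K * L)\<^sup>T * (K * L) = L\<^sup>T * K\<^sup>T * (K * L)" using K L by (simp add: transpose_mult)
  also have "\<dots> = L\<^sup>T * (K\<^sup>T * (K * L))"
    using K L by (intro assoc_mult_mat[of _ q p _ P _ q]) auto
  also have "\<dots> = L\<^sup>T * L" using K L KK by (simp add: assoc_mult_mat[of "K\<^sup>T" p P, symmetric])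
  finally show ?thesis using LL by simp
qed

lemma orthonormal_rows_mult:
  fixes R K :: "real mat"
  assumes R: "R \<in> carrier_mat p q" and K: "K \<in> carrier_mat q Q"
    and RR: "R * R\<^sup>T = 1\<^sub>m p" and KK: "K * K\<^sup>T = 1\<^sub>m q"
  shows "(R * K) * (R * K)\<^sup>T = 1\<^sub>m p"
proof -
  have "(R * K) * (R * K)\<^sup>T = R * K * (K\<^sup>T * R\<^sup>T)" using R K by (simp add: transpose_mult)
  also have "\<dots> = R * (K * (K\<^sup>T * R\<^sup>T))"
    using R K by (intro assoc_mult_mat[of _ p q _ Q _ p]) auto
  also have "\<dots> = R * R\<^sup>T" using R K KK by (simp add: assoc_mult_mat[of K q Q, symmetric])
  finally show ?thesis using RR by simp
qed

lemma orthonormal_sandwich_eq: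
  fixes K G M :: "real mat"
  assumes K: "K \<in> carrier_mat P p" and G: "G \<in> carrier_mat q Q" and M: "M \<in> carrier_mat P Q"
    and KM: "K * K\<^sup>T * M = M" and MG: "M * (G\<^sup>T * G) = M"
  shows "K * (K\<^sup>T * M * G\<^sup>T) * G = M"
proof -
  have KtM: "K\<^sup>T * M \<in> carrier_mat p Q" using K M by simp
  have Gt: "G\<^sup>T \<in> carrier_mat Q q" using G by simp
  have "K * (K\<^sup>T * M * G\<^sup>T) * G = K * (K\<^sup>T * M * (G\<^sup>T * G))"
    using assoc_mult_mat[OF K mult_carrier_mat[OF KtM Gt] G] assoc_mult_mat[OF KtM Gt G] by simp
  also have "\<dots> = K * K\<^sup>T * M * (G\<^sup>T * G)"
    using assoc_mult_mat[OF K KtM mult_carrier_mat[OF Gt G], symmetric]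
      assoc_mult_mat[OF K transpose_carrier_mat[THEN iffD2, OF K] M] by simp
  also have "\<dots> = M" using KM MG by simp
  finally show ?thesis .
qed

lemma orthonormal_sandwich_cancel:
  fixes K G B :: "real mat"
  assumes K: "K \<in> carrier_mat P p" and G: "G \<in> carrier_mat q Q" and B: "B \<in> carrier_mat p q"
    and KK: "K\<^sup>T * K = 1\<^sub>m p" and GG: "G * G\<^sup>T = 1\<^sub>m q"
  shows "K\<^sup>T * (K * B * G) * G\<^sup>T = B"
proof -
  have Kt: "K\<^sup>T \<in> carrier_mat p P" using K by simp
  have KB: "K * B \<in> carrier_mat P q" using K B by simp
  have "K\<^sup>T * (K * B) = B" using assoc_mult_mat[OF Kt K B, symmetric] KK B by simp
  then have "K\<^sup>T * (K * B * G) = B * G" using assoc_mult_mat[OF Kt KB G, symmetric] by simp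
  then show ?thesis using assoc_mult_mat[OF B G transpose_carrier_mat[THEN iffD2, OF G]] GG B by simp
qed

section \<open>Rank\<close>

context vec_space
begin

lemma rank_mult_le_left:
  assumes A: "A \<in> carrier_mat n m" and B: "B \<in> carrier_mat m k"
  shows "rank (A * B) \<le> rank A"
proof -
  have AB: "A * B \<in> carrier_mat n k" using A B by simp
  have "col_space (A * B) \<subseteq> col_space A"
  proof
    fix y assume y: "y \<in> col_space (A * B)"
    have "dim_row A = n" "dim_col B = k" using A B by auto
    then obtain x where x: "x \<in> carrier_vec k" "(A * B) *\<^sub>v x = y" and "y \<in> carrier_vec n"
      using col_space_eq[OF AB] y by auto
    moreover have "A *\<^sub>v (B *\<^sub>v x) = y" using x A B by (metis assoc_mult_mat_vec)
    moreover have "B *\<^sub>v x \<in> carrier_vec m" using B by (intro carrier_vecI) simp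
    ultimately show "y \<in> col_space A" using col_space_eq[OF A] A by auto
  qed
  then have sub: "span (set (cols (A * B))) \<subseteq> span (set (cols A))" unfolding col_space_def .
  have sA: "subspace class_ring (span (set (cols A))) V"
    by (metis A cols_dim carrier_matD(1) span_is_subspace)
  have sAB: "subspace class_ring (span (set (cols (A * B)))) V"
    by (metis AB cols_dim carrier_matD(1) span_is_subspace)
  have "subspace class_ring (span (set (cols (A * B)))) (vs (span (set (cols A))))"
    using nested_subspaces[OF sA sAB sub] .
  then show ?thesis unfolding rank_def
    using vectorspace.subspace_dim[OF subspace_is_vs[OF sA] _ fin_dim_span_cols[OF A]]
      fin_dim_span_cols[OF AB] by auto
qed

lemma rank_less_if_kernel:
  assumes A: "A \<in> carrier_mat n nc" and u: "u \<in> carrier_vec nc" "u \<noteq> 0\<^sub>v nc" "A *\<^sub>v u = 0\<^sub>v n"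
  shows "rank A < nc"
proof (rule ccontr)
  assume "\<not> rank A < nc"
  then have r: "rank A = nc" using rank_le_nc[OF A] by simp
  show False
  proof (cases "distinct (cols A)")
    case True
    then show False using full_rank_lin_indpt[OF A r] lin_depI[OF A u] by blast
  next
    case False
    obtain S where S: "maximal S (\<lambda>T. T \<subseteq> set (cols A) \<and> lin_indpt T)"
      using maximal_exists[of "(\<lambda>T. T \<subseteq> set (cols A) \<and> lin_indpt T)" "card (set (cols A))" "{}"]
      by (meson List.finite_set card_mono empty_iff empty_subsetI finite_lin_indpt2 rev_finite_subset)
    then have "card S \<le> card (set (cols A))" by (simp add: card_mono maximal_def)
    moreover have "card (set (cols A)) < nc"
      using False A card_distinct[of "cols A"] card_length[of "cols A"] by fastforce
    ultimately show False using rank_card_indpt[OF A S] r by simp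
  qed
qed

end

lemma mrank_mult_less_if_kernel:
  fixes Y Z :: "real mat"
  assumes Y: "Y \<in> carrier_mat P r" and Z: "Z \<in> carrier_mat r Q"
    and u: "u \<in> carrier_vec r" "u \<noteq> 0\<^sub>v r" "Y *\<^sub>v u = 0\<^sub>v P"
  shows "mrank (Y * Z) < r"
proof -
  have "mrank (Y * Z) = vec_space.rank P (Y * Z)" unfolding mrank_def using Y by simp
  also have "\<dots> \<le> vec_space.rank P Y" using vec_space.rank_mult_le_left[OF Y Z] .
  also have "\<dots> < r" using vec_space.rank_less_if_kernel[OF Y u] .
  finally show ?thesis .
qed

lemma proj_onto_orth_complement:
  fixes Z :: "real mat"
  assumes Z: "Z \<in> carrier_mat r Q" and v: "v \<in> carrier_vec r" "v \<noteq> 0\<^sub>v r"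
    and vZ: "\<And>j. j < Q \<Longrightarrow> (\<Sum>a<r. v $ a * Z $$ (a, j)) = 0"
  obtains Pv where "Pv \<in> carrier_mat r r" "Pv * Z = Z" "Pv *\<^sub>v v = 0\<^sub>v r"
proof -
  define s where "s = (\<Sum>a<r. v $ a * v $ a)"
  obtain a0 where a0: "a0 < r" "v $ a0 \<noteq> 0" using v
    by (metis carrier_vecD eq_vecI index_zero_vec(1) index_zero_vec(2))
  have "s > 0" unfolding s_def
    using a0 by (intro sum_pos2[of _ a0]) (auto simp: zero_less_mult_iff linorder_neq_iff)
  define Pv where "Pv = (1\<^sub>m r :: real mat) - (1 / s) \<cdot>\<^sub>m mat r r (\<lambda>(a,b). v $ a * v $ b)"
  have Pv: "Pv \<in> carrier_mat r r" unfolding Pv_def by (rule carrier_matI) simp_all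
  have PZ: "Pv * Z = Z"
  proof (rule eq_matI)
    fix a j assume "a < dim_row Z" and "j < dim_col Z"
    then have a: "a < r" and j: "j < Q" using Z by auto
    have "(Pv * Z) $$ (a, j) = (\<Sum>b<r. Pv $$ (a,b) * Z $$ (b,j))"
      using a j Pv Z by (intro index_mult_mat_sum) auto
    also have "\<dots> = (\<Sum>b<r. (if a = b then 1 else 0) * Z $$ (b,j)) -
        (1/s) * v $ a * (\<Sum>b<r. v $ b * Z $$ (b,j))"
      using a by (simp add: Pv_def sum_subtractf sum_distrib_left algebra_simps)
    also have "\<dots> = Z $$ (a, j)"
      using vZ[OF j] a by (simp add: if_distrib[where f = "\<lambda>x. x * _"] cong: if_cong)
    finally show "(Pv * Z) $$ (a, j) = Z $$ (a, j)" .
  qed (use Pv Z in auto)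
  have Pvv: "Pv *\<^sub>v v = 0\<^sub>v r"
  proof (rule eq_vecI)
    fix a assume "a < dim_vec (0\<^sub>v r :: real vec)"
    then have a: "a < r" by simp
    have "(Pv *\<^sub>v v) $ a = (\<Sum>b<r. Pv $$ (a,b) * v $ b)"
      using a Pv v by (simp add: scalar_prod_def lessThan_atLeast0)
    also have "\<dots> = (\<Sum>b<r. (if a = b then 1 else 0) * v $ b) -
        (1/s) * v $ a * (\<Sum>b<r. v $ b * v $ b)"
      using a by (simp add: Pv_def sum_subtractf sum_distrib_left algebra_simps)
    also have "\<dots> = 0"
      using a \<open>s > 0\<close> unfolding s_def[symmetric] by (simp add: if_distrib[where f = "\<lambda>x. x * _"] cong: if_cong)
    finally show "(Pv *\<^sub>v v) $ a = (0\<^sub>v r) $ a" using a by simp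
  qed (use Pv in auto)
  show thesis using that[OF Pv PZ Pvv] .
qed

lemma mrank_mult_less_if_cokernel:
  fixes Y Z :: "real mat"
  assumes Y: "Y \<in> carrier_mat P r" and Z: "Z \<in> carrier_mat r Q"
    and v: "v \<in> carrier_vec r" "v \<noteq> 0\<^sub>v r"
    and vZ: "\<And>j. j < Q \<Longrightarrow> (\<Sum>a<r. v $ a * Z $$ (a, j)) = 0"
  shows "mrank (Y * Z) < r"
proof -
  obtain Pv where Pv: "Pv \<in> carrier_mat r r" and PZ: "Pv * Z = Z" and Pvv: "Pv *\<^sub>v v = 0\<^sub>v r"
    using proj_onto_orth_complement[OF Z v vZ] .
  have "Y * Z = (Y * Pv) * Z" using PZ Y Pv Z by (metis assoc_mult_mat)
  moreover have "(Y * Pv) *\<^sub>v v = 0\<^sub>v P"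
    using Y Pv v Pvv by (auto simp: assoc_mult_mat_vec)
  ultimately show ?thesis using mrank_mult_less_if_kernel[of "Y * Pv" P r Z Q v] Y Pv Z v by simp
qed

lemma proj_absorbs_left_factor:
  fixes A A' R R' :: "real mat"
  assumes A: "A \<in> carrier_mat P r" and A': "A' \<in> carrier_mat P r"
    and R: "R \<in> carrier_mat r Q" and R': "R' \<in> carrier_mat r Q"
    and eq: "A * R = A' * R'" and AA: "A\<^sup>T * A = 1\<^sub>m r" and rk: "mrank (A * R) = r"
  shows "A * A\<^sup>T * A' = A'"
proof (rule ccontr)
  define B where "B = A * A\<^sup>T * A'"
  have B: "B \<in> carrier_mat P r" unfolding B_def using A A' by simp
  assume "\<not> A * A\<^sup>T * A' = A'"
  then obtain p al where p: "p < P" and al: "al < r" and ne: "A' $$ (p, al) \<noteq> B $$ (p, al)"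
    using B A' unfolding B_def by (metis carrier_matD eq_matI)
  define v where "v = vec r (\<lambda>a. A' $$ (p, a) - B $$ (p, a))"
  have v: "v \<in> carrier_vec r" "v \<noteq> 0\<^sub>v r"
    using al ne unfolding v_def by (auto simp: vec_eq_iff)
  have "B * R' = A * A\<^sup>T * (A' * R')"
    unfolding B_def using A A' R' by (intro assoc_mult_mat[of _ P P]) auto
  also have "\<dots> = A * (A\<^sup>T * (A * R))"
    unfolding eq[symmetric] using A R by (intro assoc_mult_mat[of _ P r]) auto
  also have "\<dots> = A * R"
    using A R AA by (simp add: assoc_mult_mat[of "A\<^sup>T" r P, symmetric])
  finally have "B * R' = A' * R'" unfolding eq .
  then have "(\<Sum>a<r. v $ a * R' $$ (a, j)) = 0" if j: "j < Q" for j
    using index_mult_mat_sum[OF A' R' p j] index_mult_mat_sum[OF B R' p j]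
    unfolding v_def by (simp add: algebra_simps sum_subtractf)
  then have "mrank (A' * R') < r" using mrank_mult_less_if_cokernel[OF A' R' v] by blast
  then show False using rk eq by simp
qed

lemma proj_absorbs_right_factor:
  fixes G G' L L' :: "real mat"
  assumes G: "G \<in> carrier_mat r Q" and G': "G' \<in> carrier_mat r Q"
    and L: "L \<in> carrier_mat P r" and L': "L' \<in> carrier_mat P r"
    and eq: "L * G = L' * G'" and GG: "G * G\<^sup>T = 1\<^sub>m r" and rk: "mrank (L * G) = r"
  shows "G' * G\<^sup>T * G = G'"
proof (rule ccontr)
  define B where "B = G' * G\<^sup>T * G"
  have B: "B \<in> carrier_mat r Q" unfolding B_def using G G' by simp
  assume "\<not> G' * G\<^sup>T * G = G'"
  then obtain al q where al: "al < r" and q: "q < Q" and ne: "G' $$ (al, q) \<noteq> B $$ (al, q)"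
    using B G' unfolding B_def by (metis carrier_matD eq_matI)
  define u where "u = vec r (\<lambda>a. G' $$ (a, q) - B $$ (a, q))"
  have u: "u \<in> carrier_vec r" "u \<noteq> 0\<^sub>v r"
    using al ne unfolding u_def by (auto simp: vec_eq_iff)
  have Gt: "G\<^sup>T \<in> carrier_mat Q r" using G by simp
  have "L' * B = L' * (G' * G\<^sup>T) * G"
    unfolding B_def using L' G' Gt G by (intro assoc_mult_mat[symmetric]) auto
  also have "\<dots> = L' * G' * G\<^sup>T * G"
    using L' G' Gt by (simp add: assoc_mult_mat)
  also have "\<dots> = L * (G * G\<^sup>T) * G"
    unfolding eq[symmetric] using L G by (simp add: assoc_mult_mat[of L P r])
  also have "\<dots> = L' * G'" using L GG eq by simp
  finally have "L' * B = L' * G'" .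
  then have "L' *\<^sub>v u = 0\<^sub>v P"
    using index_mult_mat_sum[OF L' G' _ q] index_mult_mat_sum[OF L' B _ q] L' u
    unfolding u_def by (intro eq_vecI) (auto simp: scalar_prod_def lessThan_atLeast0 algebra_simps sum_subtractf)
  then have "mrank (L' * G') < r" using mrank_mult_less_if_kernel[OF L' G' u] by blast
  then show False using rk eq by simp
qed

section \<open>Flattenings\<close>

lemma tidxD: "ix \<in> tidx n \<Longrightarrow> length ix = length n \<and> (\<forall>k<length n. ix!k < n!k)"
  by (simp add: tidx_def)

lemma unlin_append_in_tidx:
  assumes npos: "\<forall>k<length n. n!k > 0" and k: "k \<le> length n"
  shows "unlin (take k n) a @ unlin (drop k n) b \<in> tidx n"
proof -
  have "(unlin (take k n) a @ unlin (drop k n) b) ! j < n ! j" if j: "j < length n" for j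
  proof (cases "j < k")
    case True
    then have "unlin (take k n) a ! j < take k n ! j" using npos k by (intro unlin_nth_less) auto
    then show ?thesis using True k by (simp add: nth_append)
  next
    case False
    then have "unlin (drop k n) b ! (j - k) < drop k n ! (j - k)"
      using npos j k by (intro unlin_nth_less) auto
    then show ?thesis using False k j by (simp add: nth_append)
  qed
  then show ?thesis using k unfolding tidx_def by auto
qed

lemma lin_take_less: "ix \<in> tidx n \<Longrightarrow> k \<le> length n \<Longrightarrow> lin (take k n) (take k ix) < prod_list (take k n)"
  by (drule tidxD) (auto intro: lin_less)

lemma lin_drop_less: "ix \<in> tidx n \<Longrightarrow> lin (drop k n) (drop k ix) < prod_list (drop k n)"
  by (drule tidxD) (auto intro: lin_less)

lemma lin_take_Suc:
  assumes "ix \<in> tidx n" "k < length n"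
  shows "lin (take (Suc k) n) (take (Suc k) ix) = ix!k * prod_list (take k n) + lin (take k n) (take k ix)"
  using assms tidxD[OF assms(1)] lin_append_singleton[of "take k ix" "take k n" "n!k" "ix!k"]
  by (simp add: take_Suc_conv_app_nth)

lemma lin_drop_nth:
  assumes "ix \<in> tidx n" "k < length n"
  shows "lin (drop k n) (drop k ix) = lin (drop (Suc k) n) (drop (Suc k) ix) * n!k + ix!k"
  using assms tidxD[OF assms(1)] by (simp add: Cons_nth_drop_Suc[symmetric])

lemma flat_dims [simp]:
  "dim_row (flat n k Z) = prod_list (take k n)" "dim_col (flat n k Z) = prod_list (drop k n)"
  unfolding flat_def by simp_all

lemma flat_carrier: "flat n k Z \<in> carrier_mat (prod_list (take k n)) (prod_list (drop k n))"
  by (intro carrier_matI) simp_all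

lemma flat_index:
  "a < prod_list (take k n) \<Longrightarrow> b < prod_list (drop k n) \<Longrightarrow>
   flat n k Z $$ (a, b) = Z (unlin (take k n) a @ unlin (drop k n) b)"
  unfolding flat_def by simp

lemma flat_index_lin:
  assumes ix: "ix \<in> tidx n" and k: "k \<le> length n"
  shows "flat n k Z $$ (lin (take k n) (take k ix), lin (drop k n) (drop k ix)) = Z ix"
  using tidxD[OF ix] k flat_index[OF lin_take_less[OF ix k] lin_drop_less[OF ix]]
  by (simp add: unlin_lin)

lemma flat_eqI:
  assumes npos: "\<forall>k<length n. n!k > 0" and k: "k \<le> length n"
    and M: "M \<in> carrier_mat (prod_list (take k n)) (prod_list (drop k n))"
    and eq: "\<And>ix. ix \<in> tidx n \<Longrightarrow> Z ix = M $$ (lin (take k n) (take k ix), lin (drop k n) (drop k ix))"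
  shows "flat n k Z = M"
proof (rule eq_matI)
  fix a b assume "a < dim_row M" and "b < dim_col M"
  then have a: "a < prod_list (take k n)" and b: "b < prod_list (drop k n)" using M by auto
  then show "flat n k Z $$ (a, b) = M $$ (a, b)"
    using eq[OF unlin_append_in_tidx[OF npos k]] k by (simp add: flat_index lin_unlin)
qed (use M in auto)

lemma flat_unflat:
  assumes "\<forall>k<length n. n!k > 0" "k \<le> length n"
    and "M \<in> carrier_mat (prod_list (take k n)) (prod_list (drop k n))"
  shows "flat n k (unflat n k M) = M"
  using assms by (intro flat_eqI) (auto simp: unflat_def)

section \<open>Interface matrices of a tensor train\<close>

lemma rr_0 [simp]: "rr r 0 = 1"
  by (simp add: rr_def)

lemma rr_last: "length r + 1 = length n \<Longrightarrow> rr r (length n) = 1"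
  by (simp add: rr_def)

lemma prod_list_take_Suc: "k < length (n::nat list) \<Longrightarrow> prod_list (take (Suc k) n) = n!k * prod_list (take k n)"
  by (simp add: take_Suc_conv_app_nth)

lemma prod_list_drop_nth: "k < length (n::nat list) \<Longrightarrow> prod_list (drop k n) = n!k * prod_list (drop (Suc k) n)"
  by (simp add: Cons_nth_drop_Suc[symmetric])

lemma coreL_dims [simp]:
  "dim_row (coreL n r k C) = rr r (k-1) * n!(k-1)" "dim_col (coreL n r k C) = rr r k"
  unfolding coreL_def by simp_all

lemma coreR_dims [simp]:
  "dim_row (coreR n r k C) = rr r (k-1)" "dim_col (coreR n r k C) = n!(k-1) * rr r k"
  unfolding coreR_def by simp_all

lemma coreL_carrier: "coreL n r k C \<in> carrier_mat (n!(k-1) * rr r (k-1)) (rr r k)"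
  by (intro carrier_matI) simp_all

lemma coreR_carrier: "coreR n r k C \<in> carrier_mat (rr r (k-1)) (rr r k * n!(k-1))"
  by (intro carrier_matI) simp_all

lemma coreL_index:
  assumes "i < n!(k-1)" "\<alpha> < rr r (k-1)" "\<beta> < rr r k"
  shows "coreL n r k C $$ (i * rr r (k-1) + \<alpha>, \<beta>) = C i $$ (\<alpha>, \<beta>)"
  using assms mult_add_less_mult[OF assms(1,2)] by (simp add: coreL_def mult.commute)

lemma coreR_index:
  assumes "i < n!(k-1)" "\<alpha> < rr r (k-1)" "\<beta> < rr r k"
  shows "coreR n r k C $$ (\<alpha>, \<beta> * n!(k-1) + i) = C i $$ (\<alpha>, \<beta>)"
  using assms mult_add_less_mult[OF assms(3,1)] by (simp add: coreR_def mult.commute)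

lemma Xle_carrier: "k \<le> length n \<Longrightarrow> Xle n r U k \<in> carrier_mat (prod_list (take k n)) (rr r k)"
  by (induction k) (auto simp: prod_list_take_Suc intro!: carrier_matI)

lemma XgeT_last [simp]: "XgeT n r U (Suc (length n)) = 1\<^sub>m 1"
  by (simp add: XgeT_def)

lemma XgeT_Suc:
  assumes "k < length n"
  shows "XgeT n r U (Suc k) = coreR n r (Suc k) (U (Suc k)) * kron (XgeT n r U (Suc (Suc k))) (1\<^sub>m (n!k))"
proof -
  have "length n + 1 - Suc k = Suc (length n - Suc k)" using assms by simp
  moreover have "length n - (length n - Suc k) = Suc k" using assms by simp
  ultimately show ?thesis unfolding XgeT_def by simp
qed

lemma XgeT_carrier:
  assumes rl: "length r + 1 = length n" and k: "k \<le> length n"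
  shows "XgeT n r U (Suc k) \<in> carrier_mat (rr r k) (prod_list (drop k n))"
  using k
proof (induction k rule: inc_induct)
  case base then show ?case by (simp add: rr_last[OF rl])
next
  case (step k)
  then show ?case by (auto simp: XgeT_Suc prod_list_drop_nth intro!: carrier_matI)
qed

lemma Xle_orthonormal:
  assumes orth: "\<forall>k\<in>{1..<length n}. (coreL n r k (U k))\<^sup>T * coreL n r k (U k) = 1\<^sub>m (rr r k)"
  shows "k < length n \<Longrightarrow> (Xle n r U k)\<^sup>T * Xle n r U k = 1\<^sub>m (rr r k)"
proof (induction k)
  case 0 then show ?case by simp
next
  case (Suc k)
  let ?K = "kron (1\<^sub>m (n!k)) (Xle n r U k)" and ?L = "coreL n r (Suc k) (U (Suc k))"
  have X: "Xle n r U k \<in> carrier_mat (prod_list (take k n)) (rr r k)" using Xle_carrier Suc by simp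
  then have K: "?K \<in> carrier_mat (n!k * prod_list (take k n)) (n!k * rr r k)" by auto
  have KK: "?K\<^sup>T * ?K = 1\<^sub>m (n!k * rr r k)" using X Suc by (intro kron_one_orthonormal_cols) auto
  have L: "?L \<in> carrier_mat (n!k * rr r k) (rr r (Suc k))" using coreL_carrier[of n r "Suc k"] by simp
  have LL: "?L\<^sup>T * ?L = 1\<^sub>m (rr r (Suc k))" using orth Suc.prems by auto
  show ?case using orthonormal_cols_mult[OF K L KK LL] by simp
qed

lemma XgeT_orthonormal:
  assumes rl: "length r + 1 = length n"
    and orth: "\<forall>k\<in>{2..length n}. coreR n r k (U k) * (coreR n r k (U k))\<^sup>T = 1\<^sub>m (rr r (k-1))"
    and k: "1 \<le> k" "k \<le> length n"
  shows "XgeT n r U (Suc k) * (XgeT n r U (Suc k))\<^sup>T = 1\<^sub>m (rr r k)"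
  using k(2,1)
proof (induction k rule: inc_induct)
  case base then show ?case by (simp add: rr_last[OF rl])
next
  case (step k)
  let ?R = "coreR n r (Suc k) (U (Suc k))" and ?K = "kron (XgeT n r U (Suc (Suc k))) (1\<^sub>m (n!k))"
  have G: "XgeT n r U (Suc (Suc k)) \<in> carrier_mat (rr r (Suc k)) (prod_list (drop (Suc k) n))"
    using XgeT_carrier[OF rl] step by simp
  then have K: "?K \<in> carrier_mat (rr r (Suc k) * n!k) (prod_list (drop (Suc k) n) * n!k)" by auto
  have KK: "?K * ?K\<^sup>T = 1\<^sub>m (rr r (Suc k) * n!k)" using G step by (intro kron_one_orthonormal_rows) auto
  have R: "?R \<in> carrier_mat (rr r k) (rr r (Suc k) * n!k)" using coreR_carrier[of n r "Suc k"] by simp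
  have RR: "?R * ?R\<^sup>T = 1\<^sub>m (rr r k)" using orth step by auto
  show ?case using orthonormal_rows_mult[OF R K RR KK] step by (simp add: XgeT_Suc)
qed

fun tt_prefix :: "cores \<Rightarrow> nat \<Rightarrow> nat list \<Rightarrow> real mat" where
  "tt_prefix C 0 ix = 1\<^sub>m 1"
| "tt_prefix C (Suc k) ix = tt_prefix C k ix * C (Suc k) (ix!k)"

definition tt_suffix :: "nat \<Rightarrow> cores \<Rightarrow> nat \<Rightarrow> nat list \<Rightarrow> real mat" where
  "tt_suffix d C k ix = foldr (\<lambda>j M. C j (ix!(j-1)) * M) [Suc k..<Suc d] (1\<^sub>m 1)"

lemma tt_val_eq_tt_suffix: "tt_val d C ix = tt_suffix d C 0 ix $$ (0, 0)"
  by (simp add: tt_val_def tt_suffix_def)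

lemma tt_suffix_last [simp]: "tt_suffix d C d ix = 1\<^sub>m 1"
  by (simp add: tt_suffix_def)

lemma tt_suffix_Suc: "k < d \<Longrightarrow> tt_suffix d C k ix = C (Suc k) (ix!k) * tt_suffix d C (Suc k) ix"
  by (simp add: tt_suffix_def upt_conv_Cons del: upt_Suc)

context
  fixes n r :: "nat list" and C :: cores and ix :: "nat list"
  assumes cok: "\<forall>k\<in>{1..length n}. core_ok n r k (C k)" and ix: "ix \<in> tidx n"
begin

lemma core_at_carrier:
  assumes k: "k < length n"
  shows "C (Suc k) (ix!k) \<in> carrier_mat (rr r k) (rr r (Suc k))"
proof -
  have "core_ok n r (Suc k) (C (Suc k))" using cok k by auto
  then show ?thesis using tidxD[OF ix] k unfolding core_ok_def by auto
qed

lemma tt_prefix_carrier: "k \<le> length n \<Longrightarrow> tt_prefix C k ix \<in> carrier_mat 1 (rr r k)"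
proof (induction k)
  case (Suc k)
  then show ?case using mult_carrier_mat[OF _ core_at_carrier[of k]] by simp
qed simp

lemma tt_suffix_carrier:
  assumes rl: "length r + 1 = length n" and k: "k \<le> length n"
  shows "tt_suffix (length n) C k ix \<in> carrier_mat (rr r k) 1"
  using k
proof (induction k rule: inc_induct)
  case base then show ?case by (simp add: rr_last[OF rl])
next
  case (step k)
  then show ?case using core_at_carrier[of k] by (simp add: tt_suffix_Suc)
qed

lemma tt_suffix_split:
  assumes rl: "length r + 1 = length n"
  shows "k \<le> length n \<Longrightarrow> tt_suffix (length n) C 0 ix = tt_prefix C k ix * tt_suffix (length n) C k ix"
proof (induction k)
  case 0 then show ?case using tt_suffix_carrier[OF rl, of 0] by simp
next
  case (Suc k)
  then have "tt_suffix (length n) C 0 ix = tt_prefix C k ix * (C (Suc k) (ix!k) * tt_suffix (length n) C (Suc k) ix)"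
    by (simp add: tt_suffix_Suc)
  also have "\<dots> = tt_prefix C (Suc k) ix * tt_suffix (length n) C (Suc k) ix"
    using Suc.prems tt_prefix_carrier[of k] core_at_carrier[of k] tt_suffix_carrier[OF rl, of "Suc k"]
    by (simp add: assoc_mult_mat[of _ 1 "rr r k" _ "rr r (Suc k)" _ 1])
  finally show ?case .
qed

lemma Xle_index:
  "k \<le> length n \<Longrightarrow> \<beta> < rr r k \<Longrightarrow>
   Xle n r C k $$ (lin (take k n) (take k ix), \<beta>) = tt_prefix C k ix $$ (0, \<beta>)"
proof (induction k arbitrary: \<beta>)
  case 0 then show ?case by simp
next
  case (Suc k)
  have k: "k < length n" using Suc.prems by simp
  have i: "ix!k < n!k" using tidxD[OF ix] k by simp
  have X: "Xle n r C k \<in> carrier_mat (prod_list (take k n)) (rr r k)" using Xle_carrier k by simp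
  have L: "coreL n r (Suc k) (C (Suc k)) \<in> carrier_mat (n!k * rr r k) (rr r (Suc k))"
    using coreL_carrier[of n r "Suc k"] by simp
  have "Xle n r C (Suc k) $$ (lin (take (Suc k) n) (take (Suc k) ix), \<beta>) =
      (kron (1\<^sub>m (n!k)) (Xle n r C k) * coreL n r (Suc k) (C (Suc k))) $$
        (ix!k * prod_list (take k n) + lin (take k n) (take k ix), \<beta>)"
    by (simp add: lin_take_Suc[OF ix k])
  also have "\<dots> = (\<Sum>\<alpha><rr r k. Xle n r C k $$ (lin (take k n) (take k ix), \<alpha>) *
         coreL n r (Suc k) (C (Suc k)) $$ (ix!k * rr r k + \<alpha>, \<beta>))"
    using kron_one_mult_index[OF X L lin_take_less[OF ix] i Suc.prems(2)] k by simp
  also have "\<dots> = (\<Sum>\<alpha><rr r k. tt_prefix C k ix $$ (0, \<alpha>) * C (Suc k) (ix!k) $$ (\<alpha>, \<beta>))"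
    using Suc i k by (intro sum.cong refl) (simp add: coreL_index[of _ n "Suc k", simplified])
  also have "\<dots> = tt_prefix C (Suc k) ix $$ (0, \<beta>)"
    using index_mult_mat_sum[OF tt_prefix_carrier[of k] core_at_carrier[OF k], of 0 \<beta>] Suc.prems k by simp
  finally show ?case .
qed

lemma XgeT_index:
  assumes rl: "length r + 1 = length n" and k: "k \<le> length n"
  shows "\<alpha> < rr r k \<Longrightarrow>
    XgeT n r C (Suc k) $$ (\<alpha>, lin (drop k n) (drop k ix)) = tt_suffix (length n) C k ix $$ (\<alpha>, 0)"
  using k
proof (induction k arbitrary: \<alpha> rule: inc_induct)
  case base then show ?case using tidxD[OF ix] by (simp add: rr_last[OF rl])
next
  case (step k)
  have i: "ix!k < n!k" using tidxD[OF ix] step by simp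
  have G: "XgeT n r C (Suc (Suc k)) \<in> carrier_mat (rr r (Suc k)) (prod_list (drop (Suc k) n))"
    using XgeT_carrier[OF rl, of "Suc k"] step by simp
  have R: "coreR n r (Suc k) (C (Suc k)) \<in> carrier_mat (rr r k) (rr r (Suc k) * n!k)"
    using coreR_carrier[of n r "Suc k"] by simp
  have "XgeT n r C (Suc k) $$ (\<alpha>, lin (drop k n) (drop k ix)) =
      (coreR n r (Suc k) (C (Suc k)) * kron (XgeT n r C (Suc (Suc k))) (1\<^sub>m (n!k))) $$
        (\<alpha>, lin (drop (Suc k) n) (drop (Suc k) ix) * n!k + ix!k)"
    using step by (simp add: lin_drop_nth[OF ix] XgeT_Suc)
  also have "\<dots> = (\<Sum>\<beta><rr r (Suc k). coreR n r (Suc k) (C (Suc k)) $$ (\<alpha>, \<beta> * n!k + ix!k) *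
         XgeT n r C (Suc (Suc k)) $$ (\<beta>, lin (drop (Suc k) n) (drop (Suc k) ix)))"
    by (rule mult_kron_one_index[OF R G step(4) i lin_drop_less[OF ix]])
  also have "\<dots> = (\<Sum>\<beta><rr r (Suc k). C (Suc k) (ix!k) $$ (\<alpha>, \<beta>) * tt_suffix (length n) C (Suc k) ix $$ (\<beta>, 0))"
    using step i by (intro sum.cong refl) (simp add: coreR_index[of _ n "Suc k", simplified])
  also have "\<dots> = tt_suffix (length n) C k ix $$ (\<alpha>, 0)"
    using index_mult_mat_sum[OF core_at_carrier[of k] tt_suffix_carrier[OF rl, of "Suc k"], of \<alpha> 0] step
    by (simp add: tt_suffix_Suc)
  finally show ?case .
qed

lemma tt_val_eq_flat_index:
  assumes rl: "length r + 1 = length n" and k: "k \<le> length n"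
  shows "tt_val (length n) C ix =
    (Xle n r C k * XgeT n r C (Suc k)) $$ (lin (take k n) (take k ix), lin (drop k n) (drop k ix))"
proof -
  have "(Xle n r C k * XgeT n r C (Suc k)) $$ (lin (take k n) (take k ix), lin (drop k n) (drop k ix))
     = (\<Sum>\<beta><rr r k. tt_prefix C k ix $$ (0, \<beta>) * tt_suffix (length n) C k ix $$ (\<beta>, 0))"
    using index_mult_mat_sum[OF Xle_carrier[OF k] XgeT_carrier[OF rl k] lin_take_less[OF ix k] lin_drop_less[OF ix]]
    by (simp add: Xle_index[OF k] XgeT_index[OF rl k])
  also have "\<dots> = tt_val (length n) C ix"
    using index_mult_mat_sum[OF tt_prefix_carrier[OF k] tt_suffix_carrier[OF rl k], of 0 0]
    by (simp add: tt_val_eq_tt_suffix tt_suffix_split[OF rl k])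
  finally show ?thesis by simp
qed

end

lemma flat_eq_Xle_mult_XgeT:
  assumes npos: "\<forall>k<length n. n!k > 0" and rl: "length r + 1 = length n"
    and X: "is_TT n r C X" and k: "k \<le> length n"
  shows "flat n k X = Xle n r C k * XgeT n r C (Suc k)"
  using mult_carrier_mat[OF Xle_carrier[OF k] XgeT_carrier[OF rl k]] X
  by (intro flat_eqI[OF npos k]) (auto simp: is_TT_def tt_val_eq_flat_index[OF _ _ rl k])

lemma Xle_cong: "(\<And>j. 1 \<le> j \<Longrightarrow> j \<le> k \<Longrightarrow> C j = C' j) \<Longrightarrow> Xle n r C k = Xle n r C' k"
  by (induction k) auto

lemma XgeT_cong:
  "k \<le> length n \<Longrightarrow> (\<And>j. k < j \<Longrightarrow> j \<le> length n \<Longrightarrow> C j = C' j) \<Longrightarrow> XgeT n r C (Suc k) = XgeT n r C' (Suc k)"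
proof (induction k rule: inc_induct)
  case base then show ?case by simp
next
  case (step k)
  then show ?case by (simp add: XgeT_Suc)
qed

section \<open>Independence of the chosen decomposition\<close>

lemma mrank_flat_Mr:
  "X \<in> Mr n r \<Longrightarrow> 1 \<le> k \<Longrightarrow> k < length n \<Longrightarrow> length r + 1 = length n \<Longrightarrow> mrank (flat n k X) = rr r k"
  by (simp add: Mr_def rr_def)

lemma Xle_proj_absorbs:
  assumes npos: "\<forall>k<length n. n!k > 0" and rl: "length r + 1 = length n" and XM: "X \<in> Mr n r"
    and UL: "left_orth_TT n r U X" and U': "is_TT n r U' X" and k: "k < length n"
  shows "Xle n r U k * (Xle n r U k)\<^sup>T * Xle n r U' k = Xle n r U' k"
proof (cases "k = 0")
  case False
  have U: "is_TT n r U X" and orth: "\<forall>k\<in>{1..<length n}. (coreL n r k (U k))\<^sup>T * coreL n r k (U k) = 1\<^sub>m (rr r k)"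
    using UL unfolding left_orth_TT_def by auto
  have k': "k \<le> length n" using k by simp
  show ?thesis
  proof (rule proj_absorbs_left_factor[where P = "prod_list (take k n)" and Q = "prod_list (drop k n)"])
    show "Xle n r U k * XgeT n r U (Suc k) = Xle n r U' k * XgeT n r U' (Suc k)"
      using flat_eq_Xle_mult_XgeT[OF npos rl U k'] flat_eq_Xle_mult_XgeT[OF npos rl U' k'] by simp
    show "(Xle n r U k)\<^sup>T * Xle n r U k = 1\<^sub>m (rr r k)" using Xle_orthonormal[OF orth k] .
    show "mrank (Xle n r U k * XgeT n r U (Suc k)) = rr r k"
      using flat_eq_Xle_mult_XgeT[OF npos rl U k'] mrank_flat_Mr[OF XM _ k rl] False by simp
  qed (use Xle_carrier[OF k'] XgeT_carrier[OF rl k'] in auto)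
qed simp

lemma XgeT_proj_absorbs:
  assumes npos: "\<forall>k<length n. n!k > 0" and rl: "length r + 1 = length n" and XM: "X \<in> Mr n r"
    and UR: "right_orth_TT n r U X" and U': "is_TT n r U' X" and k: "1 \<le> k" "k \<le> length n"
  shows "XgeT n r U' (Suc k) * (XgeT n r U (Suc k))\<^sup>T * XgeT n r U (Suc k) = XgeT n r U' (Suc k)"
proof (cases "k = length n")
  case False
  have U: "is_TT n r U X" and orth: "\<forall>k\<in>{2..length n}. coreR n r k (U k) * (coreR n r k (U k))\<^sup>T = 1\<^sub>m (rr r (k-1))"
    using UR unfolding right_orth_TT_def by auto
  show ?thesis
  proof (rule proj_absorbs_right_factor[where P = "prod_list (take k n)" and Q = "prod_list (drop k n)"])
    show "Xle n r U k * XgeT n r U (Suc k) = Xle n r U' k * XgeT n r U' (Suc k)"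
      using flat_eq_Xle_mult_XgeT[OF npos rl U k(2)] flat_eq_Xle_mult_XgeT[OF npos rl U' k(2)] by simp
    show "XgeT n r U (Suc k) * (XgeT n r U (Suc k))\<^sup>T = 1\<^sub>m (rr r k)"
      using XgeT_orthonormal[OF rl orth k] .
    show "mrank (Xle n r U k * XgeT n r U (Suc k)) = rr r k"
      using flat_eq_Xle_mult_XgeT[OF npos rl U k(2)] mrank_flat_Mr[OF XM k(1) _ rl] False k by simp
  qed (use Xle_carrier[OF k(2)] XgeT_carrier[OF rl k(2)] in auto)
qed simp

section \<open>The range of the projectors\<close>

lemma kron_one_proj_diff_mult:
  fixes A L F H :: "real mat"
  assumes A: "A \<in> carrier_mat P r0" and L: "L \<in> carrier_mat (m * r0) r1"
    and F: "F \<in> carrier_mat (m * P) Q" and H: "H \<in> carrier_mat Q Q'"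
  defines "B \<equiv> kron (1\<^sub>m m) A * L"
  shows "(kron (1\<^sub>m m) (A * A\<^sup>T) - B * B\<^sup>T) * F * H = kron (1\<^sub>m m) A * ((kron (1\<^sub>m m) A\<^sup>T - L * B\<^sup>T) * F * H)"
proof -
  have K: "kron (1\<^sub>m m) A \<in> carrier_mat (m * P) (m * r0)" using A by auto
  have Kt: "kron (1\<^sub>m m) A\<^sup>T \<in> carrier_mat (m * r0) (m * P)" using A by auto
  have Bt: "B\<^sup>T \<in> carrier_mat r1 (m * P)" unfolding B_def using K L by simp
  have D: "kron (1\<^sub>m m) A\<^sup>T - L * B\<^sup>T \<in> carrier_mat (m * r0) (m * P)"
    using L Bt by (auto intro: minus_carrier_mat)
  have "kron (1\<^sub>m m) A * (kron (1\<^sub>m m) A\<^sup>T - L * B\<^sup>T) =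
      kron (1\<^sub>m m) A * kron (1\<^sub>m m) A\<^sup>T - kron (1\<^sub>m m) A * (L * B\<^sup>T)"
    using K Kt L Bt by (intro mult_minus_distrib_mat) auto
  also have "\<dots> = kron (1\<^sub>m m) (A * A\<^sup>T) - B * B\<^sup>T"
    using A assoc_mult_mat[OF K L Bt] by (simp add: kron_one_mult_kron_one B_def)
  finally show ?thesis
    using assoc_mult_mat[OF K D F] assoc_mult_mat[OF K mult_carrier_mat[OF D F] H] by simp
qed

lemma flat_Pk:
  fixes Y Z :: "nat list \<Rightarrow> real"
  assumes npos: "\<forall>k<length n. n!k > 0" and rl: "length r + 1 = length n" and k: "k < length n"
  defines "A \<equiv> Xle n r (SOME U. left_orth_TT n r U Y) k"
    and "B \<equiv> Xle n r (SOME U. left_orth_TT n r U Y) (Suc k)"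
    and "G \<equiv> XgeT n r (SOME U. right_orth_TT n r U Y) (Suc (Suc k))"
  shows "flat n (Suc k) (Pk n r Y (Suc k) Z) = (if Suc k < length n
      then (kron (1\<^sub>m (n!k)) (A * A\<^sup>T) - B * B\<^sup>T) * flat n (Suc k) Z * (G\<^sup>T * G)
      else kron (1\<^sub>m (n!k)) (A * A\<^sup>T) * flat n (Suc k) Z)"
proof -
  have A: "A \<in> carrier_mat (prod_list (take k n)) (rr r k)" unfolding A_def using Xle_carrier k by simp
  have B: "B \<in> carrier_mat (prod_list (take (Suc k) n)) (rr r (Suc k))"
    unfolding B_def by (rule Xle_carrier) (use k in simp)
  have G: "G \<in> carrier_mat (rr r (Suc k)) (prod_list (drop (Suc k) n))"
    unfolding G_def using XgeT_carrier[OF rl, of "Suc k"] k by simp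
  define M where "M = (if Suc k < length n
      then (kron (1\<^sub>m (n!k)) (A * A\<^sup>T) - B * B\<^sup>T) * flat n (Suc k) Z * (G\<^sup>T * G)
      else kron (1\<^sub>m (n!k)) (A * A\<^sup>T) * flat n (Suc k) Z)"
  have "M \<in> carrier_mat (prod_list (take (Suc k) n)) (prod_list (drop (Suc k) n))"
    unfolding M_def using A B G flat_carrier[of n "Suc k" Z] prod_list_take_Suc[OF k]
    by (auto intro!: minus_carrier_mat)
  moreover have "Pk n r Y (Suc k) Z = unflat n (Suc k) M"
    unfolding Pk_def Let_def A_def B_def G_def M_def by simp
  ultimately show ?thesis using flat_unflat[OF npos] k unfolding M_def by simp
qed

lemma flat_Pk_left_factor:
  fixes Z :: "nat list \<Rightarrow> real"
  assumes npos: "\<forall>k<length n. n!k > 0" and rl: "length r + 1 = length n"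
    and UL: "left_orth_TT n r U X" and k: "k < length n"
  obtains U' Y where "is_TT n r U' X" "Y \<in> carrier_mat (n!k * rr r k) (prod_list (drop (Suc k) n))"
    "flat n (Suc k) (Pk n r X (Suc k) Z) = kron (1\<^sub>m (n!k)) (Xle n r U' k) * Y"
proof -
  define U' where "U' = (SOME U. left_orth_TT n r U X)"
  have TT: "is_TT n r U' X"
    using someI[of "\<lambda>U. left_orth_TT n r U X", OF UL] unfolding U'_def left_orth_TT_def by auto
  define A where "A = Xle n r U' k"
  define L where "L = coreL n r (Suc k) (U' (Suc k))"
  define G where "G = XgeT n r (SOME U. right_orth_TT n r U X) (Suc (Suc k))"
  let ?P = "prod_list (take k n)" and ?Q = "prod_list (drop (Suc k) n)" and ?F = "flat n (Suc k) Z"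
  have A: "A \<in> carrier_mat ?P (rr r k)" unfolding A_def using Xle_carrier k by simp
  have L: "L \<in> carrier_mat (n!k * rr r k) (rr r (Suc k))" unfolding L_def using coreL_carrier[of n r "Suc k"] by simp
  have G: "G \<in> carrier_mat (rr r (Suc k)) ?Q" unfolding G_def using XgeT_carrier[OF rl, of "Suc k"] k by simp
  have F: "?F \<in> carrier_mat (n!k * ?P) ?Q" using flat_carrier[of n "Suc k" Z] prod_list_take_Suc[OF k] by simp
  have K: "kron (1\<^sub>m (n!k)) A \<in> carrier_mat (n!k * ?P) (n!k * rr r k)" using A by auto
  have Kt: "kron (1\<^sub>m (n!k)) A\<^sup>T \<in> carrier_mat (n!k * rr r k) (n!k * ?P)" using A by auto
  have flat: "flat n (Suc k) (Pk n r X (Suc k) Z) = (if Suc k < length n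
      then (kron (1\<^sub>m (n!k)) (A * A\<^sup>T) - (kron (1\<^sub>m (n!k)) A * L) * (kron (1\<^sub>m (n!k)) A * L)\<^sup>T) * ?F * (G\<^sup>T * G)
      else kron (1\<^sub>m (n!k)) (A * A\<^sup>T) * ?F)"
    using flat_Pk[OF npos rl k, of X Z] unfolding A_def L_def G_def U'_def by simp
  show thesis
  proof (cases "Suc k < length n")
    case True
    let ?Y = "(kron (1\<^sub>m (n!k)) A\<^sup>T - L * (kron (1\<^sub>m (n!k)) A * L)\<^sup>T) * ?F * (G\<^sup>T * G)"
    have H: "G\<^sup>T * G \<in> carrier_mat ?Q ?Q" using G by simp
    have "?Y \<in> carrier_mat (n!k * rr r k) ?Q" using A L F G by (auto intro!: minus_carrier_mat)
    then show thesis
      using that[OF TT, of ?Y] True flat kron_one_proj_diff_mult[OF A L F H] unfolding A_def by simp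
  next
    case False
    have "kron (1\<^sub>m (n!k)) (A * A\<^sup>T) * ?F = kron (1\<^sub>m (n!k)) A * (kron (1\<^sub>m (n!k)) A\<^sup>T * ?F)"
      using A assoc_mult_mat[OF K Kt F] by (simp add: kron_one_mult_kron_one)
    then show thesis
      using that[OF TT mult_carrier_mat[OF Kt F]] False flat unfolding A_def by simp
  qed
qed

lemma flat_Pk_right_factor:
  fixes Z :: "nat list \<Rightarrow> real"
  assumes npos: "\<forall>k<length n. n!k > 0" and rl: "length r + 1 = length n"
    and UR: "right_orth_TT n r Ut X" and k: "k < length n"
  obtains Ut' Y' where "is_TT n r Ut' X" "Y' \<in> carrier_mat (prod_list (take (Suc k) n)) (rr r (Suc k))"
    "flat n (Suc k) (Pk n r X (Suc k) Z) = Y' * XgeT n r Ut' (Suc (Suc k))"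
proof -
  define Ut' where "Ut' = (SOME U. right_orth_TT n r U X)"
  have TT: "is_TT n r Ut' X"
    using someI[of "\<lambda>U. right_orth_TT n r U X", OF UR] unfolding Ut'_def right_orth_TT_def by auto
  define A where "A = Xle n r (SOME U. left_orth_TT n r U X) k"
  define B where "B = Xle n r (SOME U. left_orth_TT n r U X) (Suc k)"
  define G where "G = XgeT n r Ut' (Suc (Suc k))"
  let ?P = "prod_list (take (Suc k) n)" and ?Q = "prod_list (drop (Suc k) n)" and ?F = "flat n (Suc k) Z"
  have G: "G \<in> carrier_mat (rr r (Suc k)) ?Q" unfolding G_def using XgeT_carrier[OF rl, of "Suc k"] k by simp
  have flat: "flat n (Suc k) (Pk n r X (Suc k) Z) = (if Suc k < length n
      then (kron (1\<^sub>m (n!k)) (A * A\<^sup>T) - B * B\<^sup>T) * ?F * (G\<^sup>T * G)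
      else kron (1\<^sub>m (n!k)) (A * A\<^sup>T) * ?F)"
    using flat_Pk[OF npos rl k, of X Z] unfolding A_def B_def G_def Ut'_def by simp
  show thesis
  proof (cases "Suc k < length n")
    case True
    have A: "A \<in> carrier_mat (prod_list (take k n)) (rr r k)" unfolding A_def using Xle_carrier k by simp
    have B: "B \<in> carrier_mat ?P (rr r (Suc k))" unfolding B_def by (rule Xle_carrier) (use k in simp)
    have Gt: "G\<^sup>T \<in> carrier_mat ?Q (rr r (Suc k))" using G by simp
    have E: "(kron (1\<^sub>m (n!k)) (A * A\<^sup>T) - B * B\<^sup>T) * ?F \<in> carrier_mat ?P ?Q"
      using A B flat_carrier[of n "Suc k" Z] prod_list_take_Suc[OF k] by (auto intro!: minus_carrier_mat)
    show thesis
      using that[OF TT mult_carrier_mat[OF E Gt]] True flat assoc_mult_mat[OF E Gt G] unfolding G_def by simp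
  next
    case False
    then have "Suc k = length n" using k by simp
    then have "G = 1\<^sub>m 1" "rr r (Suc k) = 1" "?Q = 1" using rl unfolding G_def by (auto simp: rr_def)
    then show thesis
      using that[OF TT, of "flat n (Suc k) (Pk n r X (Suc k) Z)"] flat_carrier[of n "Suc k" "Pk n r X (Suc k) Z"]
      by (simp add: G_def)
  qed
qed

lemma flat_Pk_sandwich:
  fixes Z :: "nat list \<Rightarrow> real"
  assumes npos: "\<forall>k<length n. n!k > 0" and rl: "length r + 1 = length n" and XM: "X \<in> Mr n r"
    and UL: "left_orth_TT n r U X" and UR: "right_orth_TT n r Ut X" and k: "k < length n"
  defines "K \<equiv> kron (1\<^sub>m (n!k)) (Xle n r U k)" and "G \<equiv> XgeT n r Ut (Suc (Suc k))"
    and "W \<equiv> flat n (Suc k) (Pk n r X (Suc k) Z)"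
  shows "W = K * (K\<^sup>T * W * G\<^sup>T) * G"
proof -
  obtain U' Y where U': "is_TT n r U' X"
    and Y: "Y \<in> carrier_mat (n!k * rr r k) (prod_list (drop (Suc k) n))"
    and WY: "flat n (Suc k) (Pk n r X (Suc k) Z) = kron (1\<^sub>m (n!k)) (Xle n r U' k) * Y"
    by (rule flat_Pk_left_factor[OF npos rl UL k])
  obtain Ut' Y' where Ut': "is_TT n r Ut' X"
    and Y': "Y' \<in> carrier_mat (prod_list (take (Suc k) n)) (rr r (Suc k))"
    and WY': "flat n (Suc k) (Pk n r X (Suc k) Z) = Y' * XgeT n r Ut' (Suc (Suc k))"
    by (rule flat_Pk_right_factor[OF npos rl UR k])
  let ?P = "prod_list (take k n)" and ?Q = "prod_list (drop (Suc k) n)"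
  let ?K' = "kron (1\<^sub>m (n!k)) (Xle n r U' k)" and ?G' = "XgeT n r Ut' (Suc (Suc k))"
  have A: "Xle n r U k \<in> carrier_mat ?P (rr r k)" and A': "Xle n r U' k \<in> carrier_mat ?P (rr r k)"
    using Xle_carrier k by auto
  have K': "?K' \<in> carrier_mat (n!k * ?P) (n!k * rr r k)" using A' by auto
  have KKt: "K * K\<^sup>T \<in> carrier_mat (n!k * ?P) (n!k * ?P)" unfolding K_def using A by auto
  have G: "G \<in> carrier_mat (rr r (Suc k)) ?Q" and G': "?G' \<in> carrier_mat (rr r (Suc k)) ?Q"
    unfolding G_def using XgeT_carrier[OF rl, of "Suc k"] k by auto
  have GtG: "G\<^sup>T * G \<in> carrier_mat ?Q ?Q" using G by simp
  have "K * K\<^sup>T * ?K' = ?K'"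
    using A A' Xle_proj_absorbs[OF npos rl XM UL U' k]
    unfolding K_def by (simp add: transpose_kron kron_one_mult_kron_one)
  then have KW: "K * K\<^sup>T * W = W"
    unfolding W_def WY using assoc_mult_mat[OF KKt K' Y] by simp
  have "?G' * (G\<^sup>T * G) = ?G' * G\<^sup>T * G"
    using G G' by (simp add: assoc_mult_mat[of _ "rr r (Suc k)" ?Q])
  also have "\<dots> = ?G'" using XgeT_proj_absorbs[OF npos rl XM UR Ut', of "Suc k"] k unfolding G_def by simp
  finally have WG: "W * (G\<^sup>T * G) = W"
    unfolding W_def WY' using assoc_mult_mat[OF Y' G' GtG] by simp
  have "K \<in> carrier_mat (n!k * ?P) (n!k * rr r k)" unfolding K_def using A by auto
  moreover have "W \<in> carrier_mat (n!k * ?P) ?Q"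
    unfolding W_def using flat_carrier[of n "Suc k"] prod_list_take_Suc[OF k] by simp
  ultimately show ?thesis using orthonormal_sandwich_eq[OF _ G _ KW WG] by simp
qed

lemma interface_sandwich_cancel:
  assumes rl: "length r + 1 = length n" and UL: "left_orth_TT n r U X" and UR: "right_orth_TT n r Ut X"
    and k: "k < length n" and B: "B \<in> carrier_mat (n!k * rr r k) (rr r (Suc k))"
  defines "K \<equiv> kron (1\<^sub>m (n!k)) (Xle n r U k)" and "G \<equiv> XgeT n r Ut (Suc (Suc k))"
  shows "K\<^sup>T * (K * B * G) * G\<^sup>T = B"
proof (rule orthonormal_sandwich_cancel[OF _ _ B])
  have A: "Xle n r U k \<in> carrier_mat (prod_list (take k n)) (rr r k)" using Xle_carrier k by simp
  then show "K \<in> carrier_mat (n!k * prod_list (take k n)) (n!k * rr r k)" unfolding K_def by auto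
  show "G \<in> carrier_mat (rr r (Suc k)) (prod_list (drop (Suc k) n))"
    unfolding G_def using XgeT_carrier[OF rl, of "Suc k"] k by simp
  show "K\<^sup>T * K = 1\<^sub>m (n!k * rr r k)"
    using UL kron_one_orthonormal_cols[OF A Xle_orthonormal[OF _ k]] unfolding K_def left_orth_TT_def by blast
  show "G * G\<^sup>T = 1\<^sub>m (rr r (Suc k))"
    using UR XgeT_orthonormal[OF rl _, of Ut "Suc k"] k unfolding G_def right_orth_TT_def by simp
qed

definition coreL_inv :: "nat list \<Rightarrow> nat \<Rightarrow> real mat \<Rightarrow> nat \<Rightarrow> real mat" where
  "coreL_inv r k M = (\<lambda>i. mat (rr r (k-1)) (rr r k) (\<lambda>(\<alpha>, \<beta>). M $$ (i * rr r (k-1) + \<alpha>, \<beta>)))"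

lemma core_ok_coreL_inv: "core_ok n r k (coreL_inv r k M)"
  by (simp add: core_ok_def coreL_inv_def)

lemma coreL_coreL_inv:
  assumes "M \<in> carrier_mat (n!(k-1) * rr r (k-1)) (rr r k)"
  shows "coreL n r k (coreL_inv r k M) = M"
proof (rule eq_matI)
  fix a b assume "a < dim_row M" "b < dim_col M"
  then have a: "a < rr r (k-1) * n!(k-1)" and b: "b < rr r k" using assms by (auto simp: mult.commute)
  then have "rr r (k-1) > 0" by (cases "rr r (k-1)") auto
  then show "coreL n r k (coreL_inv r k M) $$ (a, b) = M $$ (a, b)"
    using a b by (simp add: coreL_def coreL_inv_def div_mult_mod_eq)
qed (use assms in \<open>auto simp: mult.commute\<close>)

lemma tt_val_splice_core:
  assumes rl: "length r + 1 = length n" and k: "k < length n"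
    and cokU: "\<forall>k\<in>{1..length n}. core_ok n r k (U k)" and cokUt: "\<forall>k\<in>{1..length n}. core_ok n r k (Ut k)"
    and dV: "core_ok n r (Suc k) dV"
    and W: "flat n (Suc k) W = kron (1\<^sub>m (n!k)) (Xle n r U k) * coreL n r (Suc k) dV * XgeT n r Ut (Suc (Suc k))"
  defines "C \<equiv> \<lambda>j. if j < Suc k then U j else if j = Suc k then dV else Ut j"
  shows "\<forall>ix\<in>tidx n. W ix = tt_val (length n) C ix"
proof
  fix ix assume ix: "ix \<in> tidx n"
  have cok: "\<forall>j\<in>{1..length n}. core_ok n r j (C j)" using cokU cokUt dV unfolding C_def by auto
  have "Xle n r C k = Xle n r U k" by (rule Xle_cong) (simp add: C_def)
  then have "Xle n r C (Suc k) = kron (1\<^sub>m (n!k)) (Xle n r U k) * coreL n r (Suc k) dV"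
    by (simp add: C_def)
  moreover have "XgeT n r C (Suc (Suc k)) = XgeT n r Ut (Suc (Suc k))"
    using k by (intro XgeT_cong) (auto simp: C_def)
  ultimately have "W ix = (Xle n r C (Suc k) * XgeT n r C (Suc (Suc k))) $$
      (lin (take (Suc k) n) (take (Suc k) ix), lin (drop (Suc k) n) (drop (Suc k) ix))"
    using flat_index_lin[OF ix, of "Suc k" W] k W by simp
  then show "W ix = tt_val (length n) C ix"
    using tt_val_eq_flat_index[OF cok ix rl, of "Suc k"] k by simp
qed

lemma is_DP_in_tensors:
  assumes "is_DP n r c j Z D"
  shows "D \<in> tensors n"
  unfolding tensors_def
proof (intro CollectI allI impI)
  fix ix assume ix: "ix \<notin> tidx n"
  have "((\<lambda>t. (Pk n r (c t) j Z ix - Pk n r (c 0) j Z ix) / t) \<longlongrightarrow> D ix) (at 0)"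
    using assms unfolding is_DP_def by blast
  moreover have "Pk n r Y j Z ix = 0" for Y by (simp add: Pk_def Let_def unflat_def ix)
  ultimately have "((\<lambda>t::real. 0) \<longlongrightarrow> D ix) (at 0)" by simp
  then show "D ix = 0" by (rule tendsto_unique[OF at_neq_bot _ tendsto_const])
qed

theorem lemma11:
  fixes n r :: "nat list" and X V Z D :: "nat list \<Rightarrow> real"
    and U Ut :: cores and c :: "real \<Rightarrow> nat list \<Rightarrow> real" and i j :: nat
  assumes d2: "length n \<ge> 2"
    and npos: "\<forall>k<length n. n!k > 0"
    and rlen: "length r = length n - 1"
    and XM: "X \<in> Mr n r"
    and UL: "left_orth_TT n r U X"
    and UR: "right_orth_TT n r Ut X"
    and VT: "V \<in> tangent_space n r X"
    and curve: "smooth_curve n r c X V"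
    and Zt: "Z \<in> tensors n"
    and ij: "i \<in> {1..length n}" "j \<in> {1..length n}"
    and DP: "is_DP n r c j Z D"
  shows "let W = Pk n r X i D in
     (\<exists>Z'\<in>tensors n. W = Pk n r X i Z') \<and>
     (\<exists>dV. core_ok n r i dV
        \<and> (\<forall>ix\<in>tidx n. W ix = tt_val (length n)
               (\<lambda>k. if k < i then U k else if k = i then dV else Ut k) ix)
        \<and> flat n i W = kron (1\<^sub>m (n!(i-1))) (Xle n r U (i-1)) * coreL n r i dV * XgeT n r Ut (i+1)
        \<and> (\<forall>B \<in> carrier_mat (n!(i-1) * rr r (i-1)) (rr r i).
              flat n i W = kron (1\<^sub>m (n!(i-1))) (Xle n r U (i-1)) * B * XgeT n r Ut (i+1)
              \<longrightarrow> B = coreL n r i dV))"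
proof -
  have rl: "length r + 1 = length n" using rlen d2 by simp
  obtain k where i: "i = Suc k" and k: "k < length n" using ij(1) by (cases i) auto
  define W where "W = Pk n r X i D"
  define K where "K = kron (1\<^sub>m (n!k)) (Xle n r U k)"
  define G where "G = XgeT n r Ut (Suc (Suc k))"
  define C where "C = K\<^sup>T * flat n i W * G\<^sup>T"
  define dV where "dV = coreL_inv r i C"
  have "C \<in> carrier_mat (n!k * rr r k) (rr r i)"
    using Xle_carrier[of k n r U] XgeT_carrier[OF rl, of "Suc k" Ut] k i
    unfolding C_def K_def G_def by auto
  then have core: "coreL n r i dV = C" unfolding dV_def using i by (intro coreL_coreL_inv) simp
  have dV: "core_ok n r i dV" unfolding dV_def by (rule core_ok_coreL_inv)
  have "flat n i W = K * C * G"
    unfolding C_def W_def K_def G_def i by (rule flat_Pk_sandwich[OF npos rl XM UL UR k])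
  then have flatW: "flat n i W = K * coreL n r i dV * G" unfolding core .
  have unique: "B = coreL n r i dV" if "B \<in> carrier_mat (n!k * rr r k) (rr r i)" "flat n i W = K * B * G" for B
    using interface_sandwich_cancel[OF rl UL UR k, of B] that core i unfolding C_def K_def G_def by simp
  have tt: "\<forall>ix\<in>tidx n. W ix = tt_val (length n) (\<lambda>k. if k < i then U k else if k = i then dV else Ut k) ix"
    using tt_val_splice_core[OF rl k _ _ dV[unfolded i]] flatW UL UR
    unfolding i K_def G_def left_orth_TT_def right_orth_TT_def is_TT_def by simp
  have "\<exists>Z'\<in>tensors n. W = Pk n r X i Z'" using is_DP_in_tensors[OF DP] unfolding W_def by blast
  then show ?thesis
    unfolding Let_def W_def[symmetric] using dV tt flatW unique by (auto simp: i K_def G_def)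
qed

end
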